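(* Let $n,p\ge1$ be integers and let $\mathbf{A}^{p+1}_{n+1}$ be as defined in the context. Then $\mathbf{A}^{p+1}_{n+1}$ is local: it has a unique maximal proper implicative filter, namely ${\uparrow}\langle(0,0),p\rangle=\{a\in A:a\ge\langle(0,0),p\rangle\}$; consequently $\mathrm{Rad}(\mathbf{A}^{p+1}_{n+1})={\uparrow}\langle(0,0),p\rangle$.
   Context: Order $\mathbb{Z}\times\mathbb{Z}$ lexicographically: $(m,r)\preccurlyeq(k,s)$ iff $m<k$, or $m=k$ and $r\le s$; addition/subtraction of pairs is componentwise, and $\min,\max$ of pairs refer to $\preccurlyeq$. For an integer $n\ge1$ let $L^\omega_{n+1}=\{(m,r)\in\mathbb{Z}^2:(0,0)\preccurlyeq(m,r)\preccurlyeq(n,0)\}$ with $x\ast y=\max\{(0,0),x+y-(n,0)\}$ and $x\to y=\min\{(n,0),(n,0)-x+y\}$. For an integer $p\ge1$ let $L_{p+1}=\{0,1,\dots,p\}$ with $\alpha\ast\beta=\max\{0,\alpha+\beta-p\}$. Define $$A=A^{p+1}_{n+1}=\{\langle(m,r),\alpha\rangle:(m,r)\in L^\omega_{n+1},\ \alpha\in\{0,p\}\}\cup\{\langle(m,r),\alpha\rangle:(0,0)\preccurlyeq(m,r)\preccurlyeq(n-1,0),\ 0<\alpha<p\}.$$ Order: $\langle(m,r),\alpha\rangle\le\langle(k,s),\beta\rangle$ iff one of: (o1) $\alpha\neq0$, $\alpha\le\beta$ and $(m,r)\preccurlyeq(k,s)$; (o2) $\alpha=\beta=0$ and $(k,s)\preccurlyeq(m,r)$;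 (o3) $\alpha=0$, $\beta\ne0$ and $(n-1,0)\preccurlyeq(m+k,r+s)$. $\wedge,\vee$ denote meet and join for $\le$. Put $\bot=\langle(n,0),0\rangle$, $\top=\langle(n,0),p\rangle$. For $a=\langle(m,r),\alpha\rangle$, $b=\langle(k,s),\beta\rangle\in A$ define $a\odot b$ by: (P1) if $\alpha,\beta\ge1$ and $\alpha+\beta>p$: $a\odot b=\langle(m,r)\ast(k,s),\alpha+\beta-p\rangle$; (P2) if $\alpha,\beta\ge1$ and $\alpha+\beta\le p$: $a\odot b=\langle\min\{(n,0),(2n-(m+k+1),-(r+s))\},0\rangle$; (P3) if $\alpha\ge1$, $\beta=0$: $a\odot b=\langle(m,r)\to(k,s),0\rangle$, and if $\alpha=0$, $\beta\ge1$: $a\odot b=\langle(k,s)\to(m,r),0\rangle$; (P4) if $\alpha=\beta=0$: $a\odot b=\langle\min\{(n,0),(m+k+1,r+s)\},0\rangle$. Define $\sim\langle(m,r),\alpha\rangle=\langle(m,r),p-\alpha\rangle$ if $\alpha\in\{0,p\}$, and $\sim\langle(m,r),\alpha\rangle=\langle(n-1-m,-r),p-\alpha\rangle$ if $0<\alpha<p$. Define $a\Rightarrow b=\sim(a\odot\sim b)$. The algebra $\mathbf{A}^{p+1}_{n+1}$ is $\langle A;\odot,\Rightarrow,\wedge,\vee,\bot,\top\rangle$. An implicative filter is a subset $F\subseteq A$ with $\top\in F$, closed under $\odot$, and upward closed w.r.t. $\le$; it is proper if $F\ne A$. $\mathrm{Rad}(\mathbf{A}^{p+1}_{n+1})$ is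 the intersection of all maximal proper implicative filters. *)

theory Defs
  imports Main
begin

type_synonym zz = "int \<times> int"
type_synonym elt = "zz \<times> int"

definition lexle :: "zz \<Rightarrow> zz \<Rightarrow> bool" where
  "lexle x y \<longleftrightarrow> fst x < fst y \<or> (fst x = fst y \<and> snd x \<le> snd y)"

definition lexmax :: "zz \<Rightarrow> zz \<Rightarrow> zz" where
  "lexmax x y = (if lexle x y then y else x)"

definition lexmin :: "zz \<Rightarrow> zz \<Rightarrow> zz" where
  "lexmin x y = (if lexle x y then x else y)"

definition padd :: "zz \<Rightarrow> zz \<Rightarrow> zz" where
  "padd x y = (fst x + fst y, snd x + snd y)"

definition psub :: "zz \<Rightarrow> zz \<Rightarrow> zz" where
  "psub x y = (fst x - fst y, snd x - snd y)"

definition Lstar :: "int \<Rightarrow> zz \<Rightarrow> zz \<Rightarrow> zz" where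
  "Lstar n x y = lexmax (0,0) (psub (padd x y) (n,0))"

definition Limp :: "int \<Rightarrow> zz \<Rightarrow> zz \<Rightarrow> zz" where
  "Limp n x y = lexmin (n,0) (padd (psub (n,0) x) y)"

definition carrierA :: "int \<Rightarrow> int \<Rightarrow> elt set" where
  "carrierA n p =
     {(x, \<alpha>). lexle (0,0) x \<and> lexle x (n,0) \<and> (\<alpha> = 0 \<or> \<alpha> = p)}
   \<union> {(x, \<alpha>). lexle (0,0) x \<and> lexle x (n - 1, 0) \<and> 0 < \<alpha> \<and> \<alpha> < p}"

definition leA :: "int \<Rightarrow> int \<Rightarrow> elt \<Rightarrow> elt \<Rightarrow> bool" where
  "leA n p a b = (let (x, \<alpha>) = a; (y, \<beta>) = b in
      (\<alpha> \<noteq> 0 \<and> \<alpha> \<le> \<beta> \<and> lexle x y)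
    \<or> (\<alpha> = 0 \<and> \<beta> = 0 \<and> lexle y x)
    \<or> (\<alpha> = 0 \<and> \<beta> \<noteq> 0 \<and> lexle (n - 1, 0) (padd x y)))"

definition prodA :: "int \<Rightarrow> int \<Rightarrow> elt \<Rightarrow> elt \<Rightarrow> elt" where
  "prodA n p a b = (let (x, \<alpha>) = a; (y, \<beta>) = b in
     if 1 \<le> \<alpha> \<and> 1 \<le> \<beta> \<and> \<alpha> + \<beta> > p then (Lstar n x y, \<alpha> + \<beta> - p)
     else if 1 \<le> \<alpha> \<and> 1 \<le> \<beta> then
       (lexmin (n,0) (2*n - (fst x + fst y + 1), - (snd x + snd y)), 0)
     else if 1 \<le> \<alpha> \<and> \<beta> = 0 then (Limp n x y, 0)
     else if \<alpha> = 0 \<and> 1 \<le> \<beta> then (Limp n y x, 0)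
     else (lexmin (n,0) (fst x + fst y + 1, snd x + snd y), 0))"

definition topA :: "int \<Rightarrow> int \<Rightarrow> elt" where
  "topA n p = ((n,0), p)"

definition impl_filter :: "int \<Rightarrow> int \<Rightarrow> elt set \<Rightarrow> bool" where
  "impl_filter n p F \<longleftrightarrow>
     F \<subseteq> carrierA n p \<and> topA n p \<in> F
     \<and> (\<forall>a\<in>F. \<forall>b\<in>F. prodA n p a b \<in> F)
     \<and> (\<forall>a\<in>F. \<forall>b\<in>carrierA n p. leA n p a b \<longrightarrow> b \<in> F)"

definition proper_filter :: "int \<Rightarrow> int \<Rightarrow> elt set \<Rightarrow> bool" where
  "proper_filter n p F \<longleftrightarrow> impl_filter n p F \<and> F \<noteq> carrierA n p"

definition maximal_filter :: "int \<Rightarrow> int \<Rightarrow> elt set \<Rightarrow> bool" where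
  "maximal_filter n p F \<longleftrightarrow> proper_filter n p F \<and>
     (\<forall>G. proper_filter n p G \<and> F \<subseteq> G \<longrightarrow> G = F)"

definition Rad :: "int \<Rightarrow> int \<Rightarrow> elt set" where
  "Rad n p = \<Inter> {F. maximal_filter n p F}"

definition upsetA :: "int \<Rightarrow> int \<Rightarrow> elt \<Rightarrow> elt set" where
  "upsetA n p a = {b \<in> carrierA n p. leA n p a b}"

end

theory Submission
  imports Defs
begin

text \<open>Squaring an element of level 0 moves its first coordinate from m to min(n, 2m+1), so
  iterated squaring reaches the bottom \<open>\<langle>(n,0),0\<rangle>\<close>. Squaring an element of intermediate
  level \<open>0 < \<alpha> < p\<close> lands either at the lower level \<open>2\<alpha> - p\<close> or at level 0. Hence any
  implicative filter containing an element of level \<open>\<noteq> p\<close> contains the bottom and is all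
  of A, while the elements of level p, i.e. \<open>\<up>\<langle>(0,0),p\<rangle>\<close>, form a proper filter: it is
  the greatest proper filter, hence the unique maximal one.\<close>

lemma bottom_leA:
  assumes "1 \<le> n" and "b \<in> carrierA n p"
  shows "leA n p ((n,0),0) b"
  using assms by (auto simp: carrierA_def leA_def lexle_def padd_def)

lemma impl_filter_eq_carrier_if_bottom:
  assumes "impl_filter n p F" and "1 \<le> n" and "((n,0),0) \<in> F"
  shows "F = carrierA n p"
  using assms bottom_leA[of n _ p] unfolding impl_filter_def by blast

lemma impl_filter_prod_closed:
  assumes "impl_filter n p F" and "a \<in> F" and "b \<in> F"
  shows "prodA n p a b \<in> F"
  using assms unfolding impl_filter_def by blast

lemma impl_filter_level_zero_bottom:
  assumes F: "impl_filter n p F" and "((m,r),0) \<in> F" and "0 \<le> m"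
  shows "((n,0),0) \<in> F"
  using assms(2,3)
proof (induction "nat (n - m)" arbitrary: m r rule: less_induct)
  case less
  have square_in: "(lexmin (n,0) (m+m+1, r+r), 0) \<in> F"
    using impl_filter_prod_closed[OF F less.prems(1) less.prems(1)] by (simp add: prodA_def)
  show ?case
  proof (cases "n < m+m+1")
    case True
    then show ?thesis using square_in by (simp add: lexmin_def lexle_def)
  next
    case False
    then obtain s where "lexmin (n,0) (m+m+1, r+r) = (m+m+1, s)"
      by (cases "n = m+m+1 \<and> 0 \<le> r+r") (auto simp: lexmin_def lexle_def)
    moreover have "nat (n - (m+m+1)) < nat (n - m)"
      using False less.prems by simp
    ultimately show ?thesis using less.hyps[of "m+m+1" s] square_in less.prems by simp
  qed
qed

lemma impl_filter_middle_level_bottom: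
  assumes F: "impl_filter n p F" and "(x,\<alpha>) \<in> F" and "0 < \<alpha>" and "\<alpha> < p"
  shows "((n,0),0) \<in> F"
  using assms(2-4)
proof (induction "nat \<alpha>" arbitrary: x \<alpha> rule: less_induct)
  case less
  have square_in: "prodA n p (x,\<alpha>) (x,\<alpha>) \<in> F"
    using impl_filter_prod_closed[OF F less.prems(1) less.prems(1)] .
  show ?case
  proof (cases "p < \<alpha> + \<alpha>")
    case True
    then have "(Lstar n x x, \<alpha>+\<alpha>-p) \<in> F"
      using square_in less.prems by (simp add: prodA_def split_beta)
    moreover have "nat (\<alpha>+\<alpha>-p) < nat \<alpha>"
      using True less.prems by simp
    ultimately show ?thesis
      using less.hyps[of "\<alpha>+\<alpha>-p" "Lstar n x x"] True less.prems by simp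
  next
    case False
    let ?y = "lexmin (n,0) (2*n - (fst x + fst x + 1), - (snd x + snd x))"
    have "(?y, 0) \<in> F"
      using square_in False less.prems by (simp add: prodA_def split_beta)
    moreover have "(x,\<alpha>) \<in> carrierA n p"
      using F less.prems unfolding impl_filter_def by blast
    then have "0 \<le> fst ?y"
      using less.prems by (auto simp: lexmin_def lexle_def carrierA_def)
    ultimately show ?thesis
      using impl_filter_level_zero_bottom[OF F, of "fst ?y" "snd ?y"] by simp
  qed
qed

lemma proper_filter_top_level:
  assumes G: "proper_filter n p G" and "1 \<le> n" and a: "(x,\<alpha>) \<in> G"
  shows "\<alpha> = p"
proof (rule ccontr)
  assume "\<alpha> \<noteq> p"
  have F: "impl_filter n p G" using G by (simp add: proper_filter_def)
  then have "(x,\<alpha>) \<in> carrierA n p" using a unfolding impl_filter_def by blast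
  with \<open>\<alpha> \<noteq> p\<close> have "(\<alpha> = 0 \<and> 0 \<le> fst x) \<or> (0 < \<alpha> \<and> \<alpha> < p)"
    by (auto simp: carrierA_def lexle_def)
  then have "((n,0),0) \<in> G"
    using impl_filter_level_zero_bottom[OF F, of "fst x" "snd x"]
      impl_filter_middle_level_bottom[OF F a] a by auto
  then show False
    using G impl_filter_eq_carrier_if_bottom[OF F \<open>1 \<le> n\<close>] by (simp add: proper_filter_def)
qed

lemma upsetA_top_level:
  assumes "1 \<le> p"
  shows "upsetA n p ((0,0),p) = {(x,\<beta>). lexle (0,0) x \<and> lexle x (n,0) \<and> \<beta> = p}"
  using assms by (auto simp: upsetA_def carrierA_def leA_def lexle_def)

lemma proper_filter_upsetA_top_level:
  assumes "1 \<le> n" and p: "1 \<le> p"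
  shows "proper_filter n p (upsetA n p ((0,0),p))"
proof -
  have "((n,0),0) \<in> carrierA n p - upsetA n p ((0,0),p)"
    using assms upsetA_top_level[OF p] by (auto simp: carrierA_def lexle_def)
  moreover have "impl_filter n p (upsetA n p ((0,0),p))"
    unfolding impl_filter_def
  proof (intro conjI ballI impI)
    show "upsetA n p ((0,0),p) \<subseteq> carrierA n p" by (auto simp: upsetA_def)
    show "topA n p \<in> upsetA n p ((0,0),p)"
      using assms by (simp add: upsetA_top_level topA_def lexle_def)
  next
    fix a b assume "a \<in> upsetA n p ((0,0),p)" "b \<in> upsetA n p ((0,0),p)"
    then obtain x y where "a = (x,p)" "b = (y,p)" "lexle (0,0) x" "lexle x (n,0)"
        "lexle (0,0) y" "lexle y (n,0)"
      using p by (auto simp: upsetA_top_level)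
    then show "prodA n p a b \<in> upsetA n p ((0,0),p)"
      using p by (auto simp: upsetA_top_level prodA_def Lstar_def lexmax_def lexle_def
          psub_def padd_def)
  next
    fix a b assume "a \<in> upsetA n p ((0,0),p)" "b \<in> carrierA n p" "leA n p a b"
    then show "b \<in> upsetA n p ((0,0),p)"
      using p unfolding upsetA_top_level[OF p] by (auto simp: carrierA_def leA_def lexle_def)
  qed
  ultimately show ?thesis by (auto simp: proper_filter_def)
qed

lemma proper_filter_subset_upsetA_top_level:
  assumes "1 \<le> n" and p: "1 \<le> p" and G: "proper_filter n p G"
  shows "G \<subseteq> upsetA n p ((0,0),p)"
proof
  fix a assume a: "a \<in> G"
  then have "a \<in> carrierA n p" using G by (auto simp: proper_filter_def impl_filter_def)
  moreover have "snd a = p"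
    using proper_filter_top_level[OF G \<open>1 \<le> n\<close>, of "fst a" "snd a"] a by simp
  ultimately show "a \<in> upsetA n p ((0,0),p)"
    using p by (auto simp: upsetA_top_level carrierA_def lexle_def)
qed

lemma maximal_filters_eq_greatest:
  assumes "proper_filter n p U" and "\<And>G. proper_filter n p G \<Longrightarrow> G \<subseteq> U"
  shows "{F. maximal_filter n p F} = {U}"
  using assms unfolding maximal_filter_def by blast

theorem corollary3p3:
  fixes n p :: int
  assumes "1 \<le> n" and "1 \<le> p"
  shows "{F. maximal_filter n p F} = {upsetA n p ((0,0), p)}
         \<and> Rad n p = upsetA n p ((0,0), p)"
proof -
  have "{F. maximal_filter n p F} = {upsetA n p ((0,0), p)}"
    using maximal_filters_eq_greatest proper_filter_upsetA_top_level[OF assms]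
      proper_filter_subset_upsetA_top_level[OF assms] by blast
  then show ?thesis unfolding Rad_def by simp
qed

end
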